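(* Let $m \ge 2$ and $G=\mathbb{Z}^{m-1} \rtimes \mathbb{Z}/ 2\mathbb{Z}$, where $\mathbb{Z}/2\mathbb{Z}$ acts on $\mathbb{Z}^{m-1}$ by $v\mapsto -v$. In $\mathcal{M}_m$ there are exactly $2^m-1$ marked groups whose underlying group is isomorphic to $G$.
   Context: A marked group on $m$ generators is a pair $(H,S)$ with $S=(g_1,\dots,g_m)$ an ordered generating tuple of $H$; two marked groups $(H,S)$, $(H',S')$ are identified if there is an isomorphism $H\to H'$ mapping $g_i$ to $g_i'$ for all $i$. $\mathcal{M}_m$ denotes the set (space) of these equivalence classes. *)

theory Defs
  imports "HOL-Algebra.Algebra"
begin

text \<open>Elements: pairs (v, e) with v an integer vector of length m-1 (a list) and e :: bool
  representing Z/2Z (True = nontrivial element).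
  (v, a) * (w, b) = (v + a.w, a + b), where a.w = -w if a, w otherwise.\<close>

definition semidir_G :: "nat \<Rightarrow> (int list \<times> bool) monoid" where
  "semidir_G m = \<lparr> carrier = {(v, e). length v = m - 1},
     monoid.mult = (\<lambda>x y. (map2 (+) (fst x) (if snd x then map uminus (fst y) else fst y),
                      snd x \<noteq> snd y)),
     one = (replicate (m - 1) 0, False) \<rparr>"

definition marked_group :: "nat \<Rightarrow> 'a monoid \<Rightarrow> 'a list \<Rightarrow> bool" where
  "marked_group m H S \<longleftrightarrow> group H \<and> length S = m \<and> set S \<subseteq> carrier H
     \<and> generate H (set S) = carrier H"

definition marked_equiv :: "(('a monoid \<times> 'a list) \<times> ('a monoid \<times> 'a list)) set" where
  "marked_equiv = {((H, S), (H', S')). \<exists>\<phi>. \<phi> \<in> iso H H' \<and> map \<phi> S = S'}"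

definition marked_groups_iso_to :: "nat \<Rightarrow> ('b, 'c) monoid_scheme \<Rightarrow> ('a monoid \<times> 'a list) set" where
  "marked_groups_iso_to m K = {(H, S). marked_group m H S \<and> H \<cong> K}"

end

theory Submission
  imports Defs "Jordan_Normal_Form.Determinant"
begin

text \<open>
  Elements of the group are pairs (v, e) with v in Z^(m-1); the involutions are exactly the
  reflections, the pairs with e = True. For a marked group (H, S) with H isomorphic to the group,
  the list recording which generators are involutions is invariant under marked isomorphism, and
  it contains True because the translations form a proper subgroup. Conversely this list
  determines the marked group: an automorphism moving reflections by a fixed vector makes the
  first reflection among the generators equal to (0, True); the translation parts of the
  remaining m - 1 generators then generate Z^(m-1), so they form a basis (a surjective
  endomorphism of Z^(m-1) is invertible), and the linear automorphism sending them to the unit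
  vectors brings S into a normal form depending only on the list. Every list of length m
  containing True is realised by its normal form, which gives 2^m - 1 classes.
\<close>

section \<open>Quotients and marked groups\<close>

lemma card_quotient_eq_card_image:
  assumes "trans r"
    and "\<And>x y. x \<in> A \<Longrightarrow> y \<in> A \<Longrightarrow> (x, y) \<in> r \<longleftrightarrow> f x = f y"
  shows "card (A // r) = card (f ` A)"
proof -
  have class_eq: "r `` {x} = r `` {y} \<longleftrightarrow> f x = f y" if "x \<in> A" "y \<in> A" for x y
  proof
    assume "r `` {x} = r `` {y}"
    moreover have "(y, y) \<in> r" using assms(2) that(2) by blast
    ultimately have "(x, y) \<in> r" by blast
    then show "f x = f y" using assms(2) that by blast
  next
    assume "f x = f y"
    then have "(x, y) \<in> r" "(y, x) \<in> r" using assms(2) that by auto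
    then show "r `` {x} = r `` {y}" using assms(1) by (auto dest: transD)
  qed
  let ?class = "\<lambda>p. r `` {inv_into A f p}"
  have "inj_on ?class (f ` A)"
    by (auto simp: inj_on_def class_eq inv_into_into f_inv_into_f)
  moreover have "?class ` f ` A = A // r"
  proof -
    have "?class (f x) = r `` {x}" if "x \<in> A" for x
      using that by (simp add: class_eq inv_into_into f_inv_into_f)
    then show ?thesis
      unfolding quotient_def image_image by (auto cong: image_cong)
  qed
  ultimately show ?thesis
    by (metis card_image)
qed

definition involution :: "('a, 'b) monoid_scheme \<Rightarrow> 'a \<Rightarrow> bool" where
  "involution H x \<longleftrightarrow> x \<otimes>\<^bsub>H\<^esub> x = \<one>\<^bsub>H\<^esub> \<and> x \<noteq> \<one>\<^bsub>H\<^esub>"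

lemma involution_iso:
  assumes "group H" "group K" "\<phi> \<in> iso H K" "x \<in> carrier H"
  shows "involution K (\<phi> x) \<longleftrightarrow> involution H x"
proof -
  interpret group_hom H K \<phi>
    using assms by (simp add: group_hom_def group_hom_axioms_def iso_iff)
  have "inj_on \<phi> (carrier H)"
    using assms(3) by (simp add: Group.iso_iff)
  then show ?thesis
    using assms(4) unfolding involution_def
    by (metis hom_mult hom_one G.m_closed G.one_closed inj_on_eq_iff)
qed

lemma marked_group_iso:
  assumes "marked_group m H S" "group K" "\<phi> \<in> iso H K"
  shows "marked_group m K (map \<phi> S)"
proof -
  interpret group_hom H K \<phi>
    using assms by (simp add: marked_group_def group_hom_def group_hom_axioms_def iso_iff)
  have "generate K (\<phi> ` set S) = \<phi> ` carrier H"
    using assms(1) by (simp add: marked_group_def generate_img)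
  then show ?thesis
    using assms by (auto simp: marked_group_def iso_iff)
qed

lemma trans_marked_equiv: "trans marked_equiv"
  unfolding trans_def marked_equiv_def
  by (fastforce intro: iso_set_trans)

lemma iso_copy_of_countable_group:
  assumes "group K" "countable (carrier K)" "infinite (UNIV :: 'a set)"
  shows "\<exists>H :: 'a monoid. group H \<and> K \<cong> H"
proof -
  obtain g :: "nat \<Rightarrow> 'a" where "inj g"
    using infinite_countable_subset[OF assms(3)] by blast
  define f where "f = g \<circ> to_nat_on (carrier K)"
  have inj: "inj_on f (carrier K)"
    unfolding f_def using \<open>inj g\<close> inj_on_to_nat_on[OF assms(2)]
    by (simp add: comp_inj_on inj_on_subset)
  define H :: "'a monoid" where
    "H = \<lparr>carrier = f ` carrier K,
          monoid.mult = \<lambda>a b. f (inv_into (carrier K) f a \<otimes>\<^bsub>K\<^esub> inv_into (carrier K) f b),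
          one = f \<one>\<^bsub>K\<^esub>\<rparr>"
  have "f \<in> iso K H"
    using inj by (auto simp: H_def iso_def hom_def bij_betw_def group.is_monoid[OF assms(1)])
  moreover have "group (H\<lparr>one := f \<one>\<^bsub>K\<^esub>\<rparr>)"
    using group.iso_imp_img_group[OF assms(1) \<open>f \<in> iso K H\<close>] .
  ultimately show ?thesis
    by (auto simp: H_def is_iso_def)
qed

section \<open>Integer matrices acting on integer lists\<close>

definition mat_apply :: "int mat \<Rightarrow> int list \<Rightarrow> int list" where
  "mat_apply C v = list_of_vec (C *\<^sub>v vec_of_list v)"

definition unit_list :: "nat \<Rightarrow> nat \<Rightarrow> int list" where
  "unit_list n k = map (\<lambda>i. if i = k then 1 else 0) [0..<n]"

lemma length_mat_apply [simp]: "length (mat_apply C v) = dim_row C"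
  by (simp add: mat_apply_def)

lemma vec_of_list_unit_list: "vec_of_list (unit_list n k) = unit_vec n k"
  by (intro eq_vecI) (auto simp: vec_of_list_index unit_list_def unit_vec_def)

lemma nth_mat_apply:
  assumes "C \<in> carrier_mat k n" "length v = n" "i < k"
  shows "mat_apply C v ! i = (\<Sum>l<n. C $$ (i, l) * v ! l)"
  using assms
  by (simp add: mat_apply_def list_of_vec_index scalar_prod_def vec_of_list_index lessThan_atLeast0)

lemma mat_apply_add:
  assumes "C \<in> carrier_mat k n" "length v = n" "length w = n"
  shows "mat_apply C (map2 (+) v w) = map2 (+) (mat_apply C v) (mat_apply C w)"
  using assms by (intro nth_equalityI) (simp_all add: nth_mat_apply ring_distribs sum.distrib)

lemma mat_apply_uminus:
  assumes "C \<in> carrier_mat k n" "length v = n"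
  shows "mat_apply C (map uminus v) = map uminus (mat_apply C v)"
  using assms by (intro nth_equalityI) (simp_all add: nth_mat_apply sum_negf)

lemma mat_apply_zero:
  assumes "C \<in> carrier_mat k n"
  shows "mat_apply C (replicate n 0) = replicate k 0"
  using assms by (intro nth_equalityI) (simp_all add: nth_mat_apply)

lemma mat_apply_mat_apply:
  assumes "C \<in> carrier_mat k l" "B \<in> carrier_mat l n" "length v = n"
  shows "mat_apply C (mat_apply B v) = mat_apply (C * B) v"
  using assms by (simp add: mat_apply_def vec_list carrier_vecI)

lemma mat_apply_one: "length v = n \<Longrightarrow> mat_apply (1\<^sub>m n) v = v"
  by (simp add: mat_apply_def vec_list list_vec carrier_vecI)

lemma mat_apply_unit_list:
  assumes "B \<in> carrier_mat k n" "j < n"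
  shows "mat_apply B (unit_list n j) = list_of_vec (col B j)"
  using assms by (intro nth_equalityI)
    (auto simp: mat_apply_def list_of_vec_index vec_of_list_unit_list scalar_prod_def
      unit_vec_def if_distrib[of "(*) _"] cong: if_cong)

lemma int_mat_left_inverse_if_right_inverse:
  assumes "(B :: int mat) \<in> carrier_mat n n" "C \<in> carrier_mat n n" "B * C = 1\<^sub>m n"
  shows "C * B = 1\<^sub>m n"
proof -
  \<comment> \<open>Over the field of rationals one-sided inverses are two-sided.\<close>
  let ?rat = "map_mat (of_int :: int \<Rightarrow> rat)"
  have "?rat B * ?rat C = 1\<^sub>m n"
    using assms by (simp add: of_int_hom.mat_hom_one flip: of_int_hom.mat_hom_mult)
  then have "?rat C * ?rat B = 1\<^sub>m n"
    by (rule mat_mult_left_right_inverse[rotated 2]) (use assms in auto)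
  then have "?rat (C * B) = ?rat (1\<^sub>m n)"
    using assms by (simp add: of_int_hom.mat_hom_mult of_int_hom.mat_hom_one)
  then show ?thesis
    by (rule of_int_hom.mat_hom_inj)
qed

lemma int_mat_invertible_if_surjective:
  assumes B: "B \<in> carrier_mat n n"
    and surj: "\<And>k. k < n \<Longrightarrow> \<exists>c. length c = n \<and> mat_apply B c = unit_list n k"
  shows "\<exists>C \<in> carrier_mat n n. C * B = 1\<^sub>m n \<and> B * C = 1\<^sub>m n"
proof -
  obtain c where c: "\<And>k. k < n \<Longrightarrow> length (c k) = n \<and> mat_apply B (c k) = unit_list n k"
    using surj by metis
  define C where "C = mat_of_cols n (map (\<lambda>k. vec_of_list (c k)) [0..<n])"
  have C: "C \<in> carrier_mat n n"
    using mat_of_cols_carrier(1)[of n "map (\<lambda>k. vec_of_list (c k)) [0..<n]"] by (simp add: C_def)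
  have "B * C = 1\<^sub>m n"
  proof (rule mat_col_eqI)
    fix k assume "k < dim_col (1\<^sub>m n :: int mat)"
    then have k: "k < n" by simp
    have "col (B * C) k = B *\<^sub>v vec_of_list (c k)"
      using B C k c[OF k] by (simp add: col_mult2 C_def col_mat_of_cols carrier_vecI)
    also have "\<dots> = vec_of_list (mat_apply B (c k))"
      by (simp add: mat_apply_def vec_list)
    also have "\<dots> = col (1\<^sub>m n) k"
      using c[OF k] k by (simp add: vec_of_list_unit_list col_one)
    finally show "col (B * C) k = col (1\<^sub>m n) k" .
  qed (use B C in auto)
  then show ?thesis
    using int_mat_left_inverse_if_right_inverse[OF B C] C by blast
qed

lemma int_lists_generated_by_unit_lists:
  assumes zero: "replicate n 0 \<in> L"
    and add: "\<And>v w. v \<in> L \<Longrightarrow> w \<in> L \<Longrightarrow> map2 (+) v w \<in> L"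
    and neg: "\<And>v. v \<in> L \<Longrightarrow> map uminus v \<in> L"
    and unit: "\<And>k. k < n \<Longrightarrow> unit_list n k \<in> L"
    and "length v = n"
  shows "v \<in> L"
proof -
  have multiple: "map (\<lambda>i. if i = k then c else 0) [0..<n] \<in> L" if k: "k < n" for k c
  proof (induction c rule: int_induct[where k = 0])
    case base
    then show ?case using zero by (simp add: map_replicate_const)
  next
    case (step1 c)
    have "map2 (+) (map (\<lambda>i. if i = k then c else 0) [0..<n]) (unit_list n k)
        = map (\<lambda>i. if i = k then c + 1 else 0) [0..<n]"
      by (auto simp: unit_list_def intro!: nth_equalityI)
    then show ?case using add[OF step1(2) unit[OF k]] by simp
  next
    case (step2 c)
    have "map2 (+) (map (\<lambda>i. if i = k then c else 0) [0..<n]) (map uminus (unit_list n k))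
        = map (\<lambda>i. if i = k then c - 1 else 0) [0..<n]"
      by (auto simp: unit_list_def intro!: nth_equalityI)
    then show ?case using add[OF step2(2) neg[OF unit[OF k]]] by simp
  qed
  have "map (\<lambda>i. if i < t then v ! i else 0) [0..<n] \<in> L" if "t \<le> n" for t
    using that
  proof (induction t)
    case 0
    then show ?case using zero by (simp add: map_replicate_const)
  next
    case (Suc t)
    have "map2 (+) (map (\<lambda>i. if i < t then v ! i else 0) [0..<n])
        (map (\<lambda>i. if i = t then v ! t else 0) [0..<n])
        = map (\<lambda>i. if i < Suc t then v ! i else 0) [0..<n]"
      by (auto intro!: nth_equalityI)
    moreover have "t < n" using Suc.prems by simp
    ultimately show ?case using add[OF Suc.IH multiple[of t "v ! t"]] by simp
  qed
  moreover have "map (\<lambda>i. if i < n then v ! i else 0) [0..<n] = v"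
    using assms(5) by (intro nth_equalityI) auto
  ultimately show ?thesis by fastforce
qed

section \<open>The semidirect product and its automorphisms\<close>

lemma carrier_semidir_G: "carrier (semidir_G m) = {(v, e). length v = m - 1}"
  by (simp add: semidir_G_def)

lemma mult_semidir_G:
  "x \<otimes>\<^bsub>semidir_G m\<^esub> y =
     (map2 (+) (fst x) (if snd x then map uminus (fst y) else fst y), snd x \<noteq> snd y)"
  by (simp add: semidir_G_def)

lemma one_semidir_G: "\<one>\<^bsub>semidir_G m\<^esub> = (replicate (m - 1) 0, False)"
  by (simp add: semidir_G_def)

lemmas semidir_G_simps = carrier_semidir_G mult_semidir_G one_semidir_G

lemma group_semidir_G: "group (semidir_G m)"
proof (rule groupI)
  fix x y z
  assume "x \<in> carrier (semidir_G m)" "y \<in> carrier (semidir_G m)" "z \<in> carrier (semidir_G m)"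
  then show "x \<otimes>\<^bsub>semidir_G m\<^esub> y \<otimes>\<^bsub>semidir_G m\<^esub> z =
      x \<otimes>\<^bsub>semidir_G m\<^esub> (y \<otimes>\<^bsub>semidir_G m\<^esub> z)"
    by (cases x; cases y; cases z) (auto simp: semidir_G_simps intro!: nth_equalityI)
next
  fix x assume "x \<in> carrier (semidir_G m)"
  then show "\<one>\<^bsub>semidir_G m\<^esub> \<otimes>\<^bsub>semidir_G m\<^esub> x = x"
    by (cases x) (auto simp: semidir_G_simps intro!: nth_equalityI)
next
  fix x assume "x \<in> carrier (semidir_G m)"
  then show "\<exists>y \<in> carrier (semidir_G m). y \<otimes>\<^bsub>semidir_G m\<^esub> x = \<one>\<^bsub>semidir_G m\<^esub>"
    by (intro bexI[of _ "(if snd x then fst x else map uminus (fst x), snd x)"])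
       (auto simp: semidir_G_simps intro!: nth_equalityI)
qed (auto simp: semidir_G_simps)

lemma inv_semidir_G:
  assumes "x \<in> carrier (semidir_G m)"
  shows "inv\<^bsub>semidir_G m\<^esub> x = (if snd x then fst x else map uminus (fst x), snd x)"
  using assms
  by (intro group.inv_equality[OF group_semidir_G])
     (auto simp: semidir_G_simps intro!: nth_equalityI)

lemma involution_semidir_G_iff:
  assumes "x \<in> carrier (semidir_G m)"
  shows "involution (semidir_G m) x \<longleftrightarrow> snd x"
  using assms by (auto simp: involution_def semidir_G_simps list_eq_iff_nth_eq)

lemma subgroup_semidir_G_translations:
  "subgroup {x \<in> carrier (semidir_G m). \<not> snd x} (semidir_G m)"
  by (rule group.subgroupI[OF group_semidir_G])
     (auto simp: inv_semidir_G semidir_G_simps intro!: exI[of _ "replicate (m - 1) 0"])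

lemma generating_set_semidir_G_has_reflection:
  assumes "Y \<subseteq> carrier (semidir_G m)" "generate (semidir_G m) Y = carrier (semidir_G m)"
  shows "\<exists>x \<in> Y. snd x"
proof (rule ccontr)
  assume "\<not> (\<exists>x \<in> Y. snd x)"
  then have "generate (semidir_G m) Y \<subseteq> {x \<in> carrier (semidir_G m). \<not> snd x}"
    using assms(1) by (intro group.generate_subgroup_incl[OF group_semidir_G]
        subgroup_semidir_G_translations) auto
  moreover have "(replicate (m - 1) 0, True) \<in> carrier (semidir_G m)"
    by (simp add: carrier_semidir_G)
  ultimately show False using assms(2) by auto
qed

lemma subgroup_semidir_G_lattice:
  assumes "replicate (m - 1) 0 \<in> L"
    and "\<And>v w. v \<in> L \<Longrightarrow> w \<in> L \<Longrightarrow> map2 (+) v w \<in> L"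
    and "\<And>v. v \<in> L \<Longrightarrow> map uminus v \<in> L"
  shows "subgroup {x \<in> carrier (semidir_G m). fst x \<in> L} (semidir_G m)"
proof (rule group.subgroupI[OF group_semidir_G])
  show "{x \<in> carrier (semidir_G m). fst x \<in> L} \<noteq> {}"
    using assms(1) by (auto simp: carrier_semidir_G intro!: exI[of _ "replicate (m - 1) 0"])
qed (use assms in \<open>auto simp: inv_semidir_G semidir_G_simps\<close>)

lemma subgroup_semidir_G_mat_image:
  assumes B: "B \<in> carrier_mat (m - 1) (m - 1)"
  shows "subgroup {x \<in> carrier (semidir_G m). fst x \<in> mat_apply B ` {c. length c = m - 1}}
           (semidir_G m)"
proof (rule subgroup_semidir_G_lattice)
  show "replicate (m - 1) 0 \<in> mat_apply B ` {c. length c = m - 1}"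
    by (rule image_eqI[of _ _ "replicate (m - 1) 0"]) (use mat_apply_zero[OF B] in simp_all)
  show "map2 (+) v w \<in> mat_apply B ` {c. length c = m - 1}"
    if "v \<in> mat_apply B ` {c. length c = m - 1}" "w \<in> mat_apply B ` {c. length c = m - 1}" for v w
    using that by (auto simp flip: mat_apply_add[OF B])
  show "map uminus v \<in> mat_apply B ` {c. length c = m - 1}"
    if "v \<in> mat_apply B ` {c. length c = m - 1}" for v
    using that by (auto simp flip: mat_apply_uminus[OF B])
qed

lemma length_fst_carrier_semidir_G:
  "x \<in> carrier (semidir_G m) \<Longrightarrow> length (fst x) = m - 1"
  by (auto simp: carrier_semidir_G)

definition shift_reflections :: "int list \<Rightarrow> int list \<times> bool \<Rightarrow> int list \<times> bool" where
  "shift_reflections u x = (if snd x then map2 (-) (fst x) u else fst x, snd x)"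

lemma shift_reflections_iso:
  assumes "length u = m - 1"
  shows "shift_reflections u \<in> iso (semidir_G m) (semidir_G m)"
proof (rule isoI)
  show "shift_reflections u \<in> hom (semidir_G m) (semidir_G m)"
  proof (rule homI)
    fix x y assume "x \<in> carrier (semidir_G m)" "y \<in> carrier (semidir_G m)"
    then show "shift_reflections u (x \<otimes>\<^bsub>semidir_G m\<^esub> y) =
        shift_reflections u x \<otimes>\<^bsub>semidir_G m\<^esub> shift_reflections u y"
      using assms by (cases x; cases y)
        (auto simp: shift_reflections_def semidir_G_simps intro!: nth_equalityI)
  qed (use assms in \<open>auto simp: shift_reflections_def carrier_semidir_G\<close>)
  show "bij_betw (shift_reflections u) (carrier (semidir_G m)) (carrier (semidir_G m))"
    by (rule bij_betwI[where g = "shift_reflections (map uminus u)"])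
       (use assms in \<open>auto simp: shift_reflections_def carrier_semidir_G intro!: nth_equalityI\<close>)
qed

definition linear_aut :: "int mat \<Rightarrow> int list \<times> bool \<Rightarrow> int list \<times> bool" where
  "linear_aut C x = (mat_apply C (fst x), snd x)"

lemma linear_aut_iso:
  assumes C: "C \<in> carrier_mat (m - 1) (m - 1)" and B: "B \<in> carrier_mat (m - 1) (m - 1)"
    and "C * B = 1\<^sub>m (m - 1)" "B * C = 1\<^sub>m (m - 1)"
  shows "linear_aut C \<in> iso (semidir_G m) (semidir_G m)"
proof (rule isoI)
  show "linear_aut C \<in> hom (semidir_G m) (semidir_G m)"
    by (rule homI)
       (use C in \<open>auto simp: linear_aut_def semidir_G_simps mat_apply_add mat_apply_uminus\<close>)
  show "bij_betw (linear_aut C) (carrier (semidir_G m)) (carrier (semidir_G m))"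
    by (rule bij_betwI[where g = "linear_aut B"])
       (use assms in
         \<open>auto simp: linear_aut_def carrier_semidir_G mat_apply_mat_apply mat_apply_one\<close>)
qed

section \<open>Normal form of generating tuples\<close>

definition first_true :: "bool list \<Rightarrow> nat" where
  "first_true p = (LEAST i. i < length p \<and> p ! i)"

lemma first_true:
  assumes "True \<in> set p"
  shows "first_true p < length p" "p ! first_true p"
proof -
  obtain i where "i < length p \<and> p ! i"
    using assms by (auto simp: in_set_conv_nth)
  then have "first_true p < length p \<and> p ! first_true p"
    unfolding first_true_def by (rule LeastI)
  then show "first_true p < length p" "p ! first_true p" by auto
qed

definition skip_index :: "nat \<Rightarrow> nat \<Rightarrow> nat" where
  "skip_index j k = (if k < j then k else Suc k)"

lemma skip_index_cases:
  assumes "i < m" "j < m" "i \<noteq> j"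
  obtains k where "k < m - 1" "i = skip_index j k"
  using assms by (cases "i < j")
    (auto simp: skip_index_def intro: that[of i] that[of "i - 1"])

lemma skip_index_less: "j < m \<Longrightarrow> k < m - 1 \<Longrightarrow> skip_index j k < m"
  by (auto simp: skip_index_def)

text \<open>
  Generator i is (0, True) if i is the first reflection j = first_true p; otherwise its
  translation part is the k-th unit vector, where i = skip_index j k, and it is a reflection
  iff p ! i.
\<close>

definition normal_marking :: "bool list \<Rightarrow> (int list \<times> bool) list" where
  "normal_marking p =
     map (\<lambda>i. (if i = first_true p then replicate (length p - 1) 0
               else unit_list (length p - 1) (if i < first_true p then i else i - 1), p ! i))
       [0..<length p]"

lemma length_normal_marking [simp]: "length (normal_marking p) = length p"
  by (simp add: normal_marking_def)

lemma map_snd_normal_marking [simp]: "map snd (normal_marking p) = p"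
  by (auto simp: normal_marking_def intro!: nth_equalityI)

lemma normal_marking_carrier:
  "length p = m \<Longrightarrow> set (normal_marking p) \<subseteq> carrier (semidir_G m)"
  by (auto simp: normal_marking_def carrier_semidir_G unit_list_def)

lemma nth_normal_marking_first_true:
  "True \<in> set p \<Longrightarrow> normal_marking p ! first_true p = (replicate (length p - 1) 0, True)"
  by (simp add: normal_marking_def first_true)

lemma nth_normal_marking_skip_index:
  assumes "True \<in> set p" "k < length p - 1"
  shows "normal_marking p ! skip_index (first_true p) k =
    (unit_list (length p - 1) k, p ! skip_index (first_true p) k)"
  using assms by (auto simp: normal_marking_def skip_index_def)

lemma normal_marking_eqI:
  assumes p: "True \<in> set p" and snd_T: "map snd T = p"
    and first: "fst (T ! first_true p) = replicate (length p - 1) 0"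
    and skip: "\<And>k. k < length p - 1 \<Longrightarrow>
                 fst (T ! skip_index (first_true p) k) = unit_list (length p - 1) k"
  shows "T = normal_marking p"
proof (rule nth_equalityI)
  have lT: "length T = length p"
    using snd_T by auto
  then show "length T = length (normal_marking p)"
    by simp
  fix i assume "i < length T"
  then have i: "i < length p"
    using lT by simp
  have snd_i: "snd (T ! i) = p ! i"
    using \<open>i < length T\<close> unfolding snd_T[symmetric] by simp
  show "T ! i = normal_marking p ! i"
  proof (cases "i = first_true p")
    case True
    then show ?thesis
      using first snd_i first_true(2)[OF p] nth_normal_marking_first_true[OF p]
      by (simp add: prod_eq_iff)
  next
    case False
    then obtain k where "k < length p - 1" "i = skip_index (first_true p) k"
      using skip_index_cases i first_true(1)[OF p] by blast
    then show ?thesis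
      using skip snd_i nth_normal_marking_skip_index[OF p] by (simp add: prod_eq_iff)
  qed
qed

lemma generate_normal_marking:
  assumes p: "length p = m" "True \<in> set p"
  shows "generate (semidir_G m) (set (normal_marking p)) = carrier (semidir_G m)"
proof
  let ?G = "semidir_G m" and ?W = "generate (semidir_G m) (set (normal_marking p))"
  have W: "subgroup ?W ?G"
    by (rule group.generate_is_subgroup[OF group_semidir_G normal_marking_carrier[OF p(1)]])
  then show "?W \<subseteq> carrier ?G"
    by (rule subgroup.subset)
  have gen: "normal_marking p ! i \<in> ?W" if "i < m" for i
    using that p by (intro generate.incl nth_mem) simp
  have reflection: "(replicate (m - 1) 0, True) \<in> ?W"
    using gen[of "first_true p"] first_true[OF p(2)] p nth_normal_marking_first_true by simp
  have unit: "(unit_list (m - 1) k, False) \<in> ?W" if k: "k < m - 1" for k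
  proof -
    let ?i = "skip_index (first_true p) k"
    have i: "?i < m" using skip_index_less[OF _ k] first_true[OF p(2)] p(1) by simp
    have Si: "(unit_list (m - 1) k, p ! ?i) \<in> ?W"
      using gen[OF i] nth_normal_marking_skip_index[OF p(2)] k p(1) by simp
    have "(unit_list (m - 1) k, True) \<otimes>\<^bsub>?G\<^esub> (replicate (m - 1) 0, True)
        = (unit_list (m - 1) k, False)"
      by (auto simp: semidir_G_simps unit_list_def intro!: nth_equalityI)
    then show ?thesis
      using Si subgroup.m_closed[OF W Si reflection] by (cases "p ! ?i") auto
  qed
  have translation: "(v, False) \<in> ?W" if "length v = m - 1" for v
  proof (rule int_lists_generated_by_unit_lists[where L = "{v. (v, False) \<in> ?W}", simplified])
    show "(replicate (m - 1) 0, False) \<in> ?W"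
      using subgroup.one_closed[OF W] by (simp add: one_semidir_G)
    show "(map2 (+) v w, False) \<in> ?W" if "(v, False) \<in> ?W" "(w, False) \<in> ?W" for v w
      using subgroup.m_closed[OF W that] by (simp add: mult_semidir_G)
    show "(map uminus v, False) \<in> ?W" if "(v, False) \<in> ?W" for v
      using subgroup.m_inv_closed[OF W that] subgroup.subset[OF W] that
      by (auto simp: inv_semidir_G)
  qed (use unit that in auto)
  show "carrier ?G \<subseteq> ?W"
  proof
    fix x assume "x \<in> carrier ?G"
    then obtain v e where x: "x = (v, e)" "length v = m - 1"
      by (auto simp: carrier_semidir_G)
    have "(v, False) \<otimes>\<^bsub>?G\<^esub> (replicate (m - 1) 0, True) = (v, True)"
      using x by (auto simp: mult_semidir_G intro!: nth_equalityI)
    then show "x \<in> ?W"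
      using x translation subgroup.m_closed[OF W translation[OF x(2)] reflection] by (cases e) auto
  qed
qed

lemma translation_parts_form_basis:
  assumes T: "marked_group m (semidir_G m) T" and j: "j < m" "T ! j = (replicate (m - 1) 0, True)"
  shows "\<exists>C \<in> carrier_mat (m - 1) (m - 1). \<exists>B \<in> carrier_mat (m - 1) (m - 1).
           C * B = 1\<^sub>m (m - 1) \<and> B * C = 1\<^sub>m (m - 1) \<and>
           (\<forall>k < m - 1. mat_apply C (fst (T ! skip_index j k)) = unit_list (m - 1) k)"
proof -
  let ?G = "semidir_G m" and ?n = "m - 1"
  have lT: "length T = m" and sT: "set T \<subseteq> carrier ?G" and gT: "generate ?G (set T) = carrier ?G"
    using T by (auto simp: marked_group_def)
  define b where "b k = fst (T ! skip_index j k)" for k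
  have lb: "length (b k) = ?n" if "k < ?n" for k
    using sT skip_index_less[OF j(1) that] lT unfolding b_def
    by (intro length_fst_carrier_semidir_G) auto
  define B where "B = mat_of_cols ?n (map (\<lambda>k. vec_of_list (b k)) [0..<?n])"
  have B: "B \<in> carrier_mat ?n ?n"
    using mat_of_cols_carrier(1)[of ?n "map (\<lambda>k. vec_of_list (b k)) [0..<?n]"] by (simp add: B_def)
  have B_unit: "mat_apply B (unit_list ?n k) = b k" if "k < ?n" for k
    using that lb[OF that] B
    by (simp add: mat_apply_unit_list B_def col_mat_of_cols carrier_vecI list_vec)
  \<comment> \<open>The elements whose translation part lies in the image L of B form a subgroup;
    it contains T, hence everything, so B is onto.\<close>
  define L where "L = mat_apply B ` {c. length c = ?n}"
  have "subgroup {x \<in> carrier ?G. fst x \<in> L} ?G"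
    unfolding L_def by (rule subgroup_semidir_G_mat_image[OF B])
  moreover have "set T \<subseteq> {x \<in> carrier ?G. fst x \<in> L}"
  proof
    fix x assume "x \<in> set T"
    then obtain i where i: "i < m" "x = T ! i"
      using lT by (auto simp: in_set_conv_nth)
    have "fst x \<in> L"
    proof (cases "i = j")
      case True
      then show ?thesis
        using i j mat_apply_zero[OF B] unfolding L_def
        by (auto intro: image_eqI[of _ _ "replicate ?n 0"])
    next
      case False
      then obtain k where "k < ?n" "i = skip_index j k"
        using skip_index_cases i(1) j(1) by blast
      with i(2) have "fst x = mat_apply B (unit_list ?n k)"
        using B_unit[of k] by (simp add: b_def)
      then show ?thesis
        unfolding L_def by (auto simp: unit_list_def)
    qed
    then show "x \<in> {x \<in> carrier ?G. fst x \<in> L}"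
      using sT \<open>x \<in> set T\<close> by auto
  qed
  ultimately have gen_L: "generate ?G (set T) \<subseteq> {x \<in> carrier ?G. fst x \<in> L}"
    by (intro group.generate_subgroup_incl[OF group_semidir_G])
  have "unit_list ?n k \<in> L" for k
  proof -
    have "(unit_list ?n k, False) \<in> carrier ?G"
      by (simp add: carrier_semidir_G unit_list_def)
    then show ?thesis using gen_L gT by auto
  qed
  then have "\<exists>c. length c = ?n \<and> mat_apply B c = unit_list ?n k" for k
    unfolding L_def by (metis (mono_tags) imageE mem_Collect_eq)
  then obtain C where C: "C \<in> carrier_mat ?n ?n" "C * B = 1\<^sub>m ?n" "B * C = 1\<^sub>m ?n"
    using int_mat_invertible_if_surjective[OF B] by blast
  have "mat_apply C (b k) = unit_list ?n k" if "k < ?n" for k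
    using that C B by (simp flip: B_unit add: mat_apply_mat_apply mat_apply_one unit_list_def)
  then show ?thesis
    using B C unfolding b_def by blast
qed

lemma normal_form_semidir_G:
  assumes T: "marked_group m (semidir_G m) T"
  shows "\<exists>\<alpha> \<in> iso (semidir_G m) (semidir_G m). map \<alpha> T = normal_marking (map snd T)"
proof -
  let ?G = "semidir_G m" and ?n = "m - 1"
  define p where "p = map snd T"
  have lT: "length T = m" and sT: "set T \<subseteq> carrier ?G" and gT: "generate ?G (set T) = carrier ?G"
    using T by (auto simp: marked_group_def)
  have p: "length p = m" "True \<in> set p"
    using generating_set_semidir_G_has_reflection[OF sT gT] lT by (force simp: p_def)+
  define j where "j = first_true p"
  have j: "j < m" "snd (T ! j)"
    using first_true[OF p(2)] p lT by (auto simp: j_def p_def)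
  define u where "u = fst (T ! j)"
  have u: "length u = ?n"
    using sT j lT unfolding u_def by (intro length_fst_carrier_semidir_G) auto
  define T' where "T' = map (shift_reflections u) T"
  have T': "marked_group m ?G T'"
    unfolding T'_def by (rule marked_group_iso[OF T group_semidir_G shift_reflections_iso[OF u]])
  have T'_j: "T' ! j = (replicate ?n 0, True)"
    using j lT u by (auto simp: T'_def shift_reflections_def u_def intro!: nth_equalityI)
  obtain C B
    where CB: "C \<in> carrier_mat ?n ?n" "B \<in> carrier_mat ?n ?n" "C * B = 1\<^sub>m ?n" "B * C = 1\<^sub>m ?n"
    and C_T': "\<And>k. k < ?n \<Longrightarrow> mat_apply C (fst (T' ! skip_index j k)) = unit_list ?n k"
    using translation_parts_form_basis[OF T' j(1) T'_j] by blast
  have lT': "length T' = m"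
    using lT by (simp add: T'_def)
  have "map (linear_aut C) T' = normal_marking p"
  proof (rule normal_marking_eqI[OF p(2)])
    show "map snd (map (linear_aut C) T') = p"
      by (simp add: T'_def p_def linear_aut_def shift_reflections_def comp_def)
    show "fst (map (linear_aut C) T' ! first_true p) = replicate (length p - 1) 0"
      using T'_j j(1) lT' CB(1) p(1) by (simp add: linear_aut_def mat_apply_zero flip: j_def)
    show "fst (map (linear_aut C) T' ! skip_index (first_true p) k) = unit_list (length p - 1) k"
      if "k < length p - 1" for k
      using that C_T'[of k] skip_index_less[OF j(1), of k] lT' p(1)
      by (simp add: linear_aut_def flip: j_def)
  qed
  moreover have "linear_aut C \<circ> shift_reflections u \<in> iso ?G ?G"
    using iso_set_trans[OF shift_reflections_iso[OF u] linear_aut_iso[OF CB]] .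
  ultimately show ?thesis
    unfolding p_def T'_def by (metis map_map)
qed

lemma marked_group_normal_form:
  assumes "marked_group m H S" "H \<cong> semidir_G m"
  shows "\<exists>\<psi> \<in> iso H (semidir_G m). map \<psi> S = normal_marking (map (involution H) S)"
proof -
  let ?G = "semidir_G m"
  obtain \<theta> where \<theta>: "\<theta> \<in> iso H ?G"
    using assms(2) by (auto simp: is_iso_def)
  have H: "group H" and sS: "set S \<subseteq> carrier H"
    using assms(1) by (auto simp: marked_group_def)
  have "marked_group m ?G (map \<theta> S)"
    by (rule marked_group_iso[OF assms(1) group_semidir_G \<theta>])
  then obtain \<alpha> where \<alpha>: "\<alpha> \<in> iso ?G ?G" "map \<alpha> (map \<theta> S) = normal_marking (map snd (map \<theta> S))"
    using normal_form_semidir_G by blast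
  have "snd (\<theta> x) = involution H x" if "x \<in> set S" for x
  proof -
    have "x \<in> carrier H" "\<theta> x \<in> carrier ?G"
      using that sS \<theta> by (auto simp: iso_def hom_def)
    then show ?thesis
      using involution_semidir_G_iff involution_iso[OF H group_semidir_G \<theta>] by blast
  qed
  then have "map snd (map \<theta> S) = map (involution H) S"
    by simp
  then show ?thesis
    using \<alpha> iso_set_trans[OF \<theta> \<alpha>(1)] by (metis map_map)
qed

section \<open>Counting the marked groups\<close>

lemma marked_equiv_iff_involutions:
  assumes "(H, S) \<in> marked_groups_iso_to m (semidir_G m)"
    and "(H', S') \<in> marked_groups_iso_to m (semidir_G m)"
  shows "((H, S), (H', S')) \<in> marked_equiv \<longleftrightarrow> map (involution H) S = map (involution H') S'"
proof -
  have HS: "marked_group m H S" "H \<cong> semidir_G m" and HS': "marked_group m H' S'" "H' \<cong> semidir_G m"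
    using assms by (auto simp: marked_groups_iso_to_def)
  then have H: "group H" "group H'" and sS: "set S \<subseteq> carrier H" "set S' \<subseteq> carrier H'"
    by (auto simp: marked_group_def)
  show ?thesis
  proof
    assume "((H, S), (H', S')) \<in> marked_equiv"
    then obtain \<phi> where "\<phi> \<in> iso H H'" "S' = map \<phi> S"
      by (auto simp: marked_equiv_def)
    then show "map (involution H) S = map (involution H') S'"
      using involution_iso[OF H] sS(1) by auto
  next
    assume same: "map (involution H) S = map (involution H') S'"
    obtain \<psi> where
      \<psi>: "\<psi> \<in> iso H (semidir_G m)" "map \<psi> S = normal_marking (map (involution H) S)"
      using marked_group_normal_form[OF HS] by blast
    obtain \<psi>' where
      \<psi>': "\<psi>' \<in> iso H' (semidir_G m)" "map \<psi>' S' = normal_marking (map (involution H') S')"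
      using marked_group_normal_form[OF HS'] by blast
    let ?\<phi> = "inv_into (carrier H') \<psi>' \<circ> \<psi>"
    have "?\<phi> \<in> iso H H'"
      using iso_set_trans[OF \<psi>(1) group.iso_set_sym[OF H(2) \<psi>'(1)]] .
    moreover have "map ?\<phi> S = S'"
    proof -
      have "map ?\<phi> S = map (inv_into (carrier H') \<psi>') (map \<psi> S)"
        by simp
      also have "map \<psi> S = map \<psi>' S'"
        using \<psi>(2) \<psi>'(2) same by simp
      also have "map (inv_into (carrier H') \<psi>') (map \<psi>' S') = S'"
        using \<psi>'(1) sS(2) by (auto simp: iso_def bij_betw_def intro!: map_idI inv_into_f_f)
      finally show ?thesis .
    qed
    ultimately show "((H, S), (H', S')) \<in> marked_equiv"
      by (auto simp: marked_equiv_def)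
  qed
qed

lemma involution_patterns_of_marked_groups:
  assumes "infinite (UNIV :: 'a set)"
  shows "(\<lambda>(H, S). map (involution H) S) `
           (marked_groups_iso_to m (semidir_G m) :: ('a monoid \<times> 'a list) set)
         = {p. length p = m \<and> True \<in> set p}" (is "?pattern ` ?A = ?Q")
proof (intro equalityI subsetI)
  fix p assume "p \<in> ?pattern ` ?A"
  then obtain H S where "(H, S) \<in> ?A" and p: "p = map (involution H) S"
    by (auto simp: image_iff split: prod.splits)
  then have HS: "marked_group m H S" "H \<cong> semidir_G m"
    by (auto simp: marked_groups_iso_to_def)
  obtain \<psi> where \<psi>: "\<psi> \<in> iso H (semidir_G m)" "map \<psi> S = normal_marking p"
    using marked_group_normal_form[OF HS] p by blast
  have "marked_group m (semidir_G m) (normal_marking p)"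
    using marked_group_iso[OF HS(1) group_semidir_G \<psi>(1)] \<psi>(2) by simp
  then have "\<exists>x \<in> set (normal_marking p). snd x"
    by (intro generating_set_semidir_G_has_reflection) (auto simp: marked_group_def)
  then obtain x where "x \<in> set (normal_marking p)" "snd x"
    by blast
  then have "True \<in> set p"
    by (metis (full_types) imageI map_snd_normal_marking set_map)
  then show "p \<in> ?Q"
    using HS(1) p by (simp add: marked_group_def)
next
  fix p assume "p \<in> ?Q"
  then have p: "length p = m" "True \<in> set p" by auto
  obtain H :: "'a monoid" where H: "group H" "semidir_G m \<cong> H"
    using iso_copy_of_countable_group[OF group_semidir_G _ assms] by blast
  then obtain \<theta> where \<theta>: "\<theta> \<in> iso (semidir_G m) H"
    by (auto simp: is_iso_def)
  have marked: "marked_group m (semidir_G m) (normal_marking p)"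
    using p normal_marking_carrier[OF p(1)] generate_normal_marking[OF p] group_semidir_G
    by (simp add: marked_group_def)
  have "involution H (\<theta> x) = snd x" if "x \<in> set (normal_marking p)" for x
    using that normal_marking_carrier[OF p(1)] involution_iso[OF group_semidir_G H(1) \<theta>]
      involution_semidir_G_iff by blast
  then have "map (involution H) (map \<theta> (normal_marking p)) = map snd (normal_marking p)"
    unfolding map_map by (intro map_cong) auto
  moreover have "(H, map \<theta> (normal_marking p)) \<in> ?A"
    using marked_group_iso[OF marked H(1) \<theta>] group.iso_sym[OF group_semidir_G H(2)]
    by (simp add: marked_groups_iso_to_def)
  ultimately show "p \<in> ?pattern ` ?A"
    by (force simp: image_iff)
qed

lemma card_bool_lists_containing_True:
  "card {p :: bool list. length p = m \<and> True \<in> set p} = 2 ^ m - 1"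
proof -
  have "p = replicate (length p) False \<longleftrightarrow> True \<notin> set p" for p :: "bool list"
    by (induction p) auto
  then have "{p :: bool list. length p = m \<and> True \<in> set p}
      = {p. set p \<subseteq> UNIV \<and> length p = m} - {replicate m False}"
    by auto
  then show ?thesis
    using card_lists_length_eq[of "UNIV :: bool set" m]
      finite_lists_length_eq[of "UNIV :: bool set" m]
    by (simp add: card_Diff_singleton)
qed

theorem proposition5p4:
  fixes m :: nat
  assumes "m \<ge> 2"
    and "infinite (UNIV :: 'a set)"
  shows "card ((marked_groups_iso_to m (semidir_G m) :: ('a monoid \<times> 'a list) set) // marked_equiv)
           = 2 ^ m - 1"
proof -
  \<comment> \<open>The count holds for every m.\<close>
  let ?A = "marked_groups_iso_to m (semidir_G m) :: ('a monoid \<times> 'a list) set"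
  have "card (?A // marked_equiv) = card ((\<lambda>(H, S). map (involution H) S) ` ?A)"
    by (rule card_quotient_eq_card_image[OF trans_marked_equiv])
       (auto simp: marked_equiv_iff_involutions)
  also have "\<dots> = card {p :: bool list. length p = m \<and> True \<in> set p}"
    by (simp only: involution_patterns_of_marked_groups[OF assms(2)])
  finally show ?thesis
    by (simp only: card_bool_lists_containing_True)
qed

end
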